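(* Let $\overline T$ be a subspace of $\overline K^\circ$ and $\tilde q:\widetilde V\to\overline K/\overline T$ a non-trivial generalized $(\sigma,\varepsilon)$-quadratic form with sesquilinearization $\tilde f$, whose singular points span $\mathrm{PG}(\widetilde V)$. Let $U\subseteq\mathrm{Rad}(\tilde f)$ be a subspace with $U\cap\mathrm{Rad}(\tilde q)=\{0\}$, let $q:=\tilde q_U:V:=\widetilde V/U\to\overline K/\overline R$ (with $\overline R:=\overline T_U$) be the quotient form, assumed non-trivial, and let $\overline S$ be any complement of $\overline T$ in the $K$-vector space $\overline R$. Then $\tilde q$ is isomorphic to the cover $q_E^{\overline S,\overline T}$ (for any basis $E$ of $V$ of $q$-singular vectors), i.e. there is a bijective linear map $\alpha:\widetilde V\to V\oplus\overline S$ with $q_E^{\overline S,\overline T}(\alpha(v))=\tilde q(v)$ for all $v\in\widetilde V$.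
   Context: $K$ division ring, $(\sigma,\varepsilon)$ admissible pair ($\sigma$ anti-automorphism, $\varepsilon^\sigma\varepsilon=1$, $t^{\sigma^2}=\varepsilon t\varepsilon^{-1}$). $K_{\sigma,\varepsilon}=\{t-t^\sigma\varepsilon\}$, $K^{\sigma,\varepsilon}=\{t:t=-t^\sigma\varepsilon\}$, $\overline K=K/K_{\sigma,\varepsilon}$, $\bar t$ class of $t$, $\bar t\circ\lambda=\overline{\lambda^\sigma t\lambda}$, $\overline K^\circ=K^{\sigma,\varepsilon}/K_{\sigma,\varepsilon}$ (right $K$-vector space under $\circ$). A generalized $(\sigma,\varepsilon)$-quadratic form with co-defect a $\circ$-stable subgroup $\overline H$: $p:W\to\overline K/\overline H$ ($W$ right $K$-vector space) with $p(w\lambda)=p(w)\circ\lambda$ ($(\bar t+\overline H)\circ\lambda=\bar t\circ\lambda+\overline H$) and trace-valued $(\sigma,\varepsilon)$-sesquilinear $h$ ($h(x\lambda,y\mu)=\lambda^\sigma h(x,y)\mu$, $h(y,x)=h(x,y)^\sigma\varepsilon$, $h(x,x)\in\{t+t^\sigma\varepsilon\}$) with $p(x+y)=p(x)+p(y)+(\overline{h(x,y)}+\overline H)$. Non-trivial: not identically $\overline H$; singular vector: $p(w)=\overline H$. $\mathrm{Rad}(h)=\{x:h(x,W)=0\}$, $\mathrm{Rad}(p)$ its singular vectors. Quotient: $\overline H_U\supseteq\overline H$ is the subspace of $\overline K^\circ$ with $\overline H_U/\overline H=p(U)$ and $p_U(w+U)=\bar t+\overline H_U$ where $\bar t+\overline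 H=p(w)$. Cover: for $q:V\to\overline K/\overline R$ with sesquilinearization $f$, a basis $E=(e_i)_{i\in I}$ of $q$-singular vectors ($I$ totally ordered), $g_E(\sum e_i\lambda_i,\sum e_j\mu_j)=\sum_{i<j}\lambda_i^\sigma f(e_i,e_j)\mu_j$, and $\overline R=\overline S\oplus\overline T$, the form $q_E^{\overline S,\overline T}:V\oplus\overline S\to\overline K/\overline T$ is $q_E^{\overline S,\overline T}(x+\bar r)=\overline{g_E(x,x)}+\bar r+\overline T$. *)

theory Defs
  imports Main
begin

definition anti_aut :: "('k::division_ring \<Rightarrow> 'k) \<Rightarrow> bool" where
  "anti_aut \<sigma> \<longleftrightarrow> bij \<sigma> \<and> (\<forall>a b. \<sigma> (a + b) = \<sigma> a + \<sigma> b) \<and> (\<forall>a b. \<sigma> (a * b) = \<sigma> b * \<sigma> a)"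

definition admissible :: "('k::division_ring \<Rightarrow> 'k) \<Rightarrow> 'k \<Rightarrow> bool" where
  "admissible \<sigma> \<epsilon> \<longleftrightarrow> anti_aut \<sigma> \<and> \<sigma> \<epsilon> * \<epsilon> = 1 \<and> (\<forall>t. \<sigma> (\<sigma> t) = \<epsilon> * t * inverse \<epsilon>)"

definition Ksub :: "('k::division_ring \<Rightarrow> 'k) \<Rightarrow> 'k \<Rightarrow> 'k set" where
  "Ksub \<sigma> \<epsilon> = {t - \<sigma> t * \<epsilon> | t. True}"

definition Kfix :: "('k::division_ring \<Rightarrow> 'k) \<Rightarrow> 'k \<Rightarrow> 'k set" where
  "Kfix \<sigma> \<epsilon> = {t. t = - (\<sigma> t * \<epsilon>)}"

text \<open>A subgroup Hbar of Kbar = K/K_{sigma,eps} is represented by its preimage H in K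
  (a subgroup of K containing K_{sigma,eps}); elements of Kbar/Hbar = K/H are represented
  as cosets t + H (sets).\<close>
definition coset :: "'k::ab_group_add set \<Rightarrow> 'k \<Rightarrow> 'k set" where
  "coset H t = {t + h | h. h \<in> H}"

definition stable_subgroup :: "('k::division_ring \<Rightarrow> 'k) \<Rightarrow> 'k \<Rightarrow> 'k set \<Rightarrow> bool" where
  "stable_subgroup \<sigma> \<epsilon> H \<longleftrightarrow> Ksub \<sigma> \<epsilon> \<subseteq> H \<and> 0 \<in> H \<and> (\<forall>a\<in>H. \<forall>b\<in>H. a - b \<in> H)
     \<and> (\<forall>t\<in>H. \<forall>l. \<sigma> l * t * l \<in> H)"

definition Kcirc_subspace :: "('k::division_ring \<Rightarrow> 'k) \<Rightarrow> 'k \<Rightarrow> 'k set \<Rightarrow> bool" where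
  "Kcirc_subspace \<sigma> \<epsilon> H \<longleftrightarrow> stable_subgroup \<sigma> \<epsilon> H \<and> H \<subseteq> Kfix \<sigma> \<epsilon>"

definition cplus :: "'k::ab_group_add set \<Rightarrow> 'k set \<Rightarrow> 'k set" where
  "cplus C D = {c + d | c d. c \<in> C \<and> d \<in> D}"

definition circK :: "('k::division_ring \<Rightarrow> 'k) \<Rightarrow> 'k \<Rightarrow> 'k set \<Rightarrow> 'k \<Rightarrow> 'k set" where
  "circK \<sigma> \<epsilon> C l = {\<sigma> l * t * l + d | t d. t \<in> C \<and> d \<in> Ksub \<sigma> \<epsilon>}"

definition rvs :: "('v::ab_group_add \<Rightarrow> 'k::division_ring \<Rightarrow> 'v) \<Rightarrow> bool" where
  "rvs sm \<longleftrightarrow> (\<forall>x. sm x 1 = x) \<and> (\<forall>x a b. sm x (a * b) = sm (sm x a) b)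
     \<and> (\<forall>x y a. sm (x + y) a = sm x a + sm y a) \<and> (\<forall>x a b. sm x (a + b) = sm x a + sm x b)"

definition rsubspace :: "('v::ab_group_add \<Rightarrow> 'k::division_ring \<Rightarrow> 'v) \<Rightarrow> 'v set \<Rightarrow> bool" where
  "rsubspace sm U \<longleftrightarrow> 0 \<in> U \<and> (\<forall>x\<in>U. \<forall>y\<in>U. x + y \<in> U) \<and> (\<forall>x\<in>U. \<forall>a. sm x a \<in> U)"

definition rspan :: "('v::ab_group_add \<Rightarrow> 'k::division_ring \<Rightarrow> 'v) \<Rightarrow> 'v set \<Rightarrow> 'v set" where
  "rspan sm A = {v. \<exists>F c. finite F \<and> F \<subseteq> A \<and> v = (\<Sum>a\<in>F. sm a (c a))}"

definition rindep :: "('v::ab_group_add \<Rightarrow> 'k::division_ring \<Rightarrow> 'v) \<Rightarrow> ('i \<Rightarrow> 'v) \<Rightarrow> bool" where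
  "rindep sm E \<longleftrightarrow> (\<forall>F c. finite F \<longrightarrow> (\<Sum>i\<in>F. sm (E i) (c i)) = 0 \<longrightarrow> (\<forall>i\<in>F. c i = 0))"

definition rbasis :: "('v::ab_group_add \<Rightarrow> 'k::division_ring \<Rightarrow> 'v) \<Rightarrow> ('i \<Rightarrow> 'v) \<Rightarrow> bool" where
  "rbasis sm E \<longleftrightarrow> rindep sm E \<and> rspan sm (range E) = UNIV"

definition rlinear :: "('v::ab_group_add \<Rightarrow> 'k::division_ring \<Rightarrow> 'v) \<Rightarrow> ('w::ab_group_add \<Rightarrow> 'k \<Rightarrow> 'w)
    \<Rightarrow> ('v \<Rightarrow> 'w) \<Rightarrow> bool" where
  "rlinear smV smW g \<longleftrightarrow> (\<forall>x y. g (x + y) = g x + g y) \<and> (\<forall>x a. g (smV x a) = smW (g x) a)"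

definition coord :: "('v::ab_group_add \<Rightarrow> 'k::division_ring \<Rightarrow> 'v) \<Rightarrow> ('i \<Rightarrow> 'v) \<Rightarrow> 'v \<Rightarrow> 'i \<Rightarrow> 'k" where
  "coord sm E x = (THE c. finite {i. c i \<noteq> 0} \<and> x = (\<Sum>i\<in>{i. c i \<noteq> 0}. sm (E i) (c i)))"

definition trace_valued_sesq :: "('k::division_ring \<Rightarrow> 'k) \<Rightarrow> 'k \<Rightarrow> ('v::ab_group_add \<Rightarrow> 'k \<Rightarrow> 'v)
    \<Rightarrow> ('v \<Rightarrow> 'v \<Rightarrow> 'k) \<Rightarrow> bool" where
  "trace_valued_sesq \<sigma> \<epsilon> sm h \<longleftrightarrow>
     (\<forall>x y z. h (x + y) z = h x z + h y z) \<and> (\<forall>x y z. h x (y + z) = h x y + h x z)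
   \<and> (\<forall>x y a b. h (sm x a) (sm y b) = \<sigma> a * h x y * b)
   \<and> (\<forall>x y. h y x = \<sigma> (h x y) * \<epsilon>)
   \<and> (\<forall>x. \<exists>t. h x x = t + \<sigma> t * \<epsilon>)"

definition gen_qf :: "('k::division_ring \<Rightarrow> 'k) \<Rightarrow> 'k \<Rightarrow> ('v::ab_group_add \<Rightarrow> 'k \<Rightarrow> 'v) \<Rightarrow> 'k set
    \<Rightarrow> ('v \<Rightarrow> 'k set) \<Rightarrow> ('v \<Rightarrow> 'v \<Rightarrow> 'k) \<Rightarrow> bool" where
  "gen_qf \<sigma> \<epsilon> sm H p h \<longleftrightarrow> stable_subgroup \<sigma> \<epsilon> H
   \<and> (\<forall>w. \<exists>t. p w = coset H t)
   \<and> (\<forall>w l t. p w = coset H t \<longrightarrow> p (sm w l) = coset H (\<sigma> l * t * l))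
   \<and> trace_valued_sesq \<sigma> \<epsilon> sm h
   \<and> (\<forall>x y t s. p x = coset H t \<longrightarrow> p y = coset H s \<longrightarrow> p (x + y) = coset H (t + s + h x y))"

definition nontrivial_qf :: "'k::ab_group_add set \<Rightarrow> ('v \<Rightarrow> 'k set) \<Rightarrow> bool" where
  "nontrivial_qf H p \<longleftrightarrow> (\<exists>w. p w \<noteq> H)"

definition singular :: "'k::ab_group_add set \<Rightarrow> ('v \<Rightarrow> 'k set) \<Rightarrow> 'v \<Rightarrow> bool" where
  "singular H p w \<longleftrightarrow> p w = H"

definition Rad_sesq :: "('v \<Rightarrow> 'v \<Rightarrow> 'k::zero) \<Rightarrow> 'v set" where
  "Rad_sesq h = {x. \<forall>y. h x y = 0}"

definition Rad_qf :: "'k::ab_group_add set \<Rightarrow> ('v \<Rightarrow> 'k set) \<Rightarrow> ('v \<Rightarrow> 'v \<Rightarrow> 'k) \<Rightarrow> 'v set" where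
  "Rad_qf H p h = {x \<in> Rad_sesq h. singular H p x}"

text \<open>Hbar_U: preimage in K of the subgroup with Hbar_U/Hbar = p(U)\<close>
definition quot_codefect :: "'k::ab_group_add set \<Rightarrow> ('v \<Rightarrow> 'k set) \<Rightarrow> 'v set \<Rightarrow> 'k set" where
  "quot_codefect H p U = \<Union> (p ` U)"

definition gE :: "('k::division_ring \<Rightarrow> 'k) \<Rightarrow> ('v::ab_group_add \<Rightarrow> 'k \<Rightarrow> 'v) \<Rightarrow> ('i::linorder \<Rightarrow> 'v)
    \<Rightarrow> ('v \<Rightarrow> 'v \<Rightarrow> 'k) \<Rightarrow> 'v \<Rightarrow> 'v \<Rightarrow> 'k" where
  "gE \<sigma> sm E f x y = (let a = coord sm E x; b = coord sm E y in
     (\<Sum>(i, j) \<in> {(i, j). i < j \<and> a i \<noteq> 0 \<and> b j \<noteq> 0}. \<sigma> (a i) * f (E i) (E j) * b j))"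

text \<open>The cover q_E^{S,T} on V (+) Sbar, where an element of Sbar is a coset of K_{sigma,eps}:
  q(x + rbar) = gE(x,x) + rbar + Tbar (a coset of T).\<close>
definition cover :: "('k::division_ring \<Rightarrow> 'k) \<Rightarrow> ('v::ab_group_add \<Rightarrow> 'k \<Rightarrow> 'v) \<Rightarrow> ('i::linorder \<Rightarrow> 'v)
    \<Rightarrow> ('v \<Rightarrow> 'v \<Rightarrow> 'k) \<Rightarrow> 'k set \<Rightarrow> 'v \<times> 'k set \<Rightarrow> 'k set" where
  "cover \<sigma> sm E f T xr = {gE \<sigma> sm E f (fst xr) (fst xr) + r + t | r t. r \<in> snd xr \<and> t \<in> T}"

end

theory Submission
  imports Defs
begin

text \<open>
  The proof constructs the isomorphism \<open>\<alpha>(v) = (\<pi> v, s(v - L(\<pi> v)))\<close> in three steps: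
  (1) every basis vector \<open>E i\<close> lifts to a \<open>qt\<close>-singular vector \<open>et i\<close> (correct an arbitrary lift
      by a vector of \<open>U\<close>, which is possible because \<open>q(E i)\<close> is trivial modulo \<open>R = qt(U)\<close>);
      the linear section \<open>L\<close> of \<open>\<pi>\<close> sending \<open>E i\<close> to \<open>et i\<close> then satisfies
      \<open>qt(L x) = g_E(x,x) + T\<close>, by expanding \<open>qt\<close> on a combination of singular vectors;
  (2) on \<open>U \<subseteq> Rad ft\<close> the form \<open>qt\<close> is additive and semilinear with values in \<open>R/T \<cong> S\<close>,
      giving a semilinear map \<open>s : U \<rightarrow> S/K\<close>, injective since \<open>U \<inter> Rad qt = 0\<close> and onto;
  (3) every \<open>v\<close> splits as \<open>L(\<pi> v) + u\<close> with \<open>u \<in> U\<close>, and \<open>qt(v) = g_E(\<pi> v,\<pi> v) + s(u) + T\<close>.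
\<close>

lemma rvs_add_sc: "rvs sm \<Longrightarrow> sm x (a + b) = sm x a + sm x b"
  unfolding rvs_def by blast

lemma rvs_add_vec: "rvs sm \<Longrightarrow> sm (x + y) a = sm x a + sm y a"
  unfolding rvs_def by blast

lemma rvs_mult: "rvs sm \<Longrightarrow> sm x (a * b) = sm (sm x a) b"
  unfolding rvs_def by blast

lemma rvs_zero_sc: "rvs sm \<Longrightarrow> sm x 0 = 0"
  using rvs_add_sc[of sm x 0 0] by simp

lemma rvs_zero_vec: "rvs sm \<Longrightarrow> sm 0 a = 0"
  using rvs_add_vec[of sm 0 0 a] by simp

lemma rvs_diff_sc: "rvs sm \<Longrightarrow> sm x (a - b) = sm x a - sm x b"
  using rvs_add_sc[of sm x "a - b" b] by (simp add: algebra_simps)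

lemma rvs_diff_vec: "rvs sm \<Longrightarrow> sm (x - y) a = sm x a - sm y a"
  using rvs_add_vec[of sm "x - y" y a] by (simp add: algebra_simps)

lemma rvs_sum_vec: "rvs sm \<Longrightarrow> sm (\<Sum>i\<in>F. g i) a = (\<Sum>i\<in>F. sm (g i) a)"
  by (induction F rule: infinite_finite_induct) (simp_all add: rvs_zero_vec rvs_add_vec)

lemma rlin_add: "rlinear s1 s2 g \<Longrightarrow> g (x + y) = g x + g y"
  unfolding rlinear_def by blast

lemma rlin_sm: "rlinear s1 s2 g \<Longrightarrow> g (s1 x a) = s2 (g x) a"
  unfolding rlinear_def by blast

lemma rlin_zero: "rlinear s1 s2 g \<Longrightarrow> g 0 = 0"
  using rlin_add[of s1 s2 g 0 0] by simp

lemma rlin_diff: "rlinear s1 s2 g \<Longrightarrow> g (x - y) = g x - g y"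
  using rlin_add[of s1 s2 g "x - y" y] by (simp add: algebra_simps)

lemma rlin_sum: "rlinear s1 s2 g \<Longrightarrow> g (\<Sum>i\<in>F. h i) = (\<Sum>i\<in>F. g (h i))"
  by (induction F rule: infinite_finite_induct) (simp_all add: rlin_zero rlin_add)

lemma sum_over_support:
  assumes "rvs sm" "finite F" "{i. c i \<noteq> 0} \<subseteq> F"
  shows "(\<Sum>i\<in>F. sm (E i) (c i)) = (\<Sum>i\<in>{i. c i \<noteq> 0}. sm (E i) (c i))"
  by (rule sum.mono_neutral_right) (use assms in \<open>auto simp: rvs_zero_sc\<close>)

context
  fixes sm :: "'v::ab_group_add \<Rightarrow> 'k::division_ring \<Rightarrow> 'v" and E :: "'i \<Rightarrow> 'v"
  assumes vs: "rvs sm" and basis: "rbasis sm E"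
begin

text \<open>Basis vectors are pairwise distinct (otherwise \<open>E i - E j = 0\<close> is a dependence).\<close>
lemma rbasis_inj: "inj E"
proof (rule injI, rule ccontr)
  fix i j assume eq: "E i = E j" and ne: "i \<noteq> j"
  let ?c = "\<lambda>k. if k = i then (1::'k) else -1"
  have "sm (E j) (-1) = - sm (E j) 1"
    using rvs_diff_sc[OF vs, of "E j" 0 1] rvs_zero_sc[OF vs, of "E j"] by simp
  hence "(\<Sum>k\<in>{i,j}. sm (E k) (?c k)) = 0"
    using ne eq by simp
  moreover have "rindep sm E" using basis unfolding rbasis_def by blast
  ultimately have "\<forall>k\<in>{i,j}. ?c k = 0"
    unfolding rindep_def by (elim allE[of _ "{i,j}"] allE[of _ ?c]) simp
  thus False by simp
qed

lemma rbasis_coord_ex: "\<exists>c. finite {i. c i \<noteq> 0} \<and> x = (\<Sum>i\<in>{i. c i \<noteq> 0}. sm (E i) (c i))"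
proof -
  have "x \<in> rspan sm (range E)" using basis unfolding rbasis_def by simp
  then obtain F c where F: "finite F" "F \<subseteq> range E" and x: "x = (\<Sum>a\<in>F. sm a (c a))"
    unfolding rspan_def by blast
  define d where "d i = (if E i \<in> F then c (E i) else 0)" for i
  have fin: "finite (E -` F)" using F(1) rbasis_inj by (simp add: finite_vimageI)
  have supp: "{i. d i \<noteq> 0} \<subseteq> E -` F" unfolding d_def by auto
  have "x = (\<Sum>i\<in>E -` F. sm (E i) (c (E i)))"
    unfolding x using F(2)
    by (subst sum.reindex_cong[where l=E and B="E -` F"])
       (use rbasis_inj in \<open>auto intro: inj_on_subset\<close>)
  also have "\<dots> = (\<Sum>i\<in>E -` F. sm (E i) (d i))" unfolding d_def by (rule sum.cong) auto
  also have "\<dots> = (\<Sum>i\<in>{i. d i \<noteq> 0}. sm (E i) (d i))"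
    by (rule sum_over_support[OF vs fin supp])
  finally show ?thesis using finite_subset[OF supp fin] by blast
qed

lemma rbasis_coord_uniq:
  assumes fc: "finite {i. c i \<noteq> 0}" and fd: "finite {i. d i \<noteq> 0}"
    and eq: "(\<Sum>i\<in>{i. c i \<noteq> 0}. sm (E i) (c i)) = (\<Sum>i\<in>{i. d i \<noteq> 0}. sm (E i) (d i))"
  shows "c = d"
proof -
  let ?F = "{i. c i \<noteq> 0} \<union> {i. d i \<noteq> 0}"
  have fF: "finite ?F" using fc fd by simp
  have "(\<Sum>i\<in>?F. sm (E i) (c i - d i)) = (\<Sum>i\<in>?F. sm (E i) (c i)) - (\<Sum>i\<in>?F. sm (E i) (d i))"
    by (simp add: rvs_diff_sc[OF vs] sum_subtractf)
  also have "\<dots> = 0"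
    using sum_over_support[OF vs fF, of c E] sum_over_support[OF vs fF, of d E] eq by auto
  finally have dep: "(\<Sum>i\<in>?F. sm (E i) (c i - d i)) = 0" .
  have indep: "rindep sm E" using basis unfolding rbasis_def by blast
  have zero: "\<And>i. i \<in> ?F \<Longrightarrow> c i - d i = 0"
    using indep[unfolded rindep_def, rule_format, OF fF dep] .
  show ?thesis
  proof
    fix i show "c i = d i" using zero by (cases "i \<in> ?F") auto
  qed
qed

lemma coord_spec:
  "finite {i. coord sm E x i \<noteq> 0} \<and> x = (\<Sum>i\<in>{i. coord sm E x i \<noteq> 0}. sm (E i) (coord sm E x i))"
proof -
  have "\<exists>!c. finite {i. c i \<noteq> 0} \<and> x = (\<Sum>i\<in>{i. c i \<noteq> 0}. sm (E i) (c i))"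
    by (rule ex_ex1I) (use rbasis_coord_ex rbasis_coord_uniq in blast)+
  from theI'[OF this] show ?thesis unfolding coord_def .
qed

lemma coord_fin: "finite {i. coord sm E x i \<noteq> 0}"
  using coord_spec by blast

lemma coord_sum: "(\<Sum>i\<in>{i. coord sm E x i \<noteq> 0}. sm (E i) (coord sm E x i)) = x"
  using coord_spec by (metis (no_types))

lemma coord_eq:
  assumes "finite {i. c i \<noteq> 0}" and "(\<Sum>i\<in>{i. c i \<noteq> 0}. sm (E i) (c i)) = x"
  shows "coord sm E x = c"
  by (rule rbasis_coord_uniq[OF coord_fin assms(1)]) (simp only: coord_sum assms(2))

lemma coord_add: "coord sm E (x + y) = (\<lambda>i. coord sm E x i + coord sm E y i)"
proof -
  let ?c = "coord sm E x" and ?d = "coord sm E y"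
  let ?F = "{i. ?c i \<noteq> 0} \<union> {i. ?d i \<noteq> 0}"
  have fF: "finite ?F" using coord_fin by simp
  have sub: "{i. ?c i + ?d i \<noteq> 0} \<subseteq> ?F" by auto
  have "(\<Sum>i\<in>{i. ?c i + ?d i \<noteq> 0}. sm (E i) (?c i + ?d i)) = (\<Sum>i\<in>?F. sm (E i) (?c i + ?d i))"
    using sum_over_support[OF vs fF sub] by simp
  also have "\<dots> = (\<Sum>i\<in>?F. sm (E i) (?c i)) + (\<Sum>i\<in>?F. sm (E i) (?d i))"
    by (simp add: rvs_add_sc[OF vs] sum.distrib)
  also have "\<dots> = x + y"
    using sum_over_support[OF vs fF, of ?c E] sum_over_support[OF vs fF, of ?d E]
      coord_sum[of x] coord_sum[of y] by simp
  finally show ?thesis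
    by (intro coord_eq) (use finite_subset[OF sub fF] in auto)
qed

lemma coord_sm: "coord sm E (sm x l) = (\<lambda>i. coord sm E x i * l)"
proof -
  let ?c = "coord sm E x"
  let ?F = "{i. ?c i \<noteq> 0}"
  have fF: "finite ?F" using coord_fin by simp
  have sub: "{i. ?c i * l \<noteq> 0} \<subseteq> ?F" by auto
  have "(\<Sum>i\<in>{i. ?c i * l \<noteq> 0}. sm (E i) (?c i * l)) = (\<Sum>i\<in>?F. sm (E i) (?c i * l))"
    using sum_over_support[OF vs fF sub] by simp
  also have "\<dots> = sm (\<Sum>i\<in>?F. sm (E i) (?c i)) l"
    by (simp add: rvs_mult[OF vs] rvs_sum_vec[OF vs])
  also have "\<dots> = sm x l" using coord_sum[of x] by simp
  finally show ?thesis
    by (intro coord_eq) (use finite_subset[OF sub fF] in auto)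
qed

end

definition lin_ext :: "('u::ab_group_add \<Rightarrow> 'k::division_ring \<Rightarrow> 'u) \<Rightarrow> ('v::ab_group_add \<Rightarrow> 'k \<Rightarrow> 'v)
    \<Rightarrow> ('i \<Rightarrow> 'v) \<Rightarrow> ('i \<Rightarrow> 'u) \<Rightarrow> 'v \<Rightarrow> 'u" where
  "lin_ext smw sm E w x = (\<Sum>i\<in>{i. coord sm E x i \<noteq> 0}. smw (w i) (coord sm E x i))"

context
  fixes smw :: "'u::ab_group_add \<Rightarrow> 'k::division_ring \<Rightarrow> 'u" and sm :: "'v::ab_group_add \<Rightarrow> 'k \<Rightarrow> 'v"
    and E :: "'i \<Rightarrow> 'v" and w :: "'i \<Rightarrow> 'u"
  assumes vs_w: "rvs smw" and vs: "rvs sm" and basis: "rbasis sm E"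
begin

lemma lin_ext_support:
  "finite F \<Longrightarrow> {i. coord sm E x i \<noteq> 0} \<subseteq> F
    \<Longrightarrow> (\<Sum>i\<in>F. smw (w i) (coord sm E x i)) = lin_ext smw sm E w x"
  unfolding lin_ext_def by (rule sum_over_support[OF vs_w])

lemma lin_ext_add: "lin_ext smw sm E w (x + y) = lin_ext smw sm E w x + lin_ext smw sm E w y"
proof -
  let ?c = "coord sm E"
  let ?F = "{i. ?c x i \<noteq> 0} \<union> {i. ?c y i \<noteq> 0}"
  have fF: "finite ?F" using coord_fin[OF vs basis] by simp
  have ca: "?c (x + y) = (\<lambda>i. ?c x i + ?c y i)" using coord_add[OF vs basis] .
  have "lin_ext smw sm E w (x + y) = (\<Sum>i\<in>?F. smw (w i) (?c (x + y) i))"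
    by (rule lin_ext_support[symmetric, OF fF]) (auto simp: ca)
  also have "\<dots> = (\<Sum>i\<in>?F. smw (w i) (?c x i)) + (\<Sum>i\<in>?F. smw (w i) (?c y i))"
    by (simp add: ca rvs_add_sc[OF vs_w] sum.distrib)
  also have "\<dots> = lin_ext smw sm E w x + lin_ext smw sm E w y"
    using lin_ext_support[OF fF] by auto
  finally show ?thesis .
qed

lemma lin_ext_sm: "lin_ext smw sm E w (sm x l) = smw (lin_ext smw sm E w x) l"
proof -
  let ?c = "coord sm E"
  let ?F = "{i. ?c x i \<noteq> 0}"
  have fF: "finite ?F" using coord_fin[OF vs basis] by simp
  have ca: "?c (sm x l) = (\<lambda>i. ?c x i * l)" using coord_sm[OF vs basis] .
  have "lin_ext smw sm E w (sm x l) = (\<Sum>i\<in>?F. smw (w i) (?c (sm x l) i))"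
    by (rule lin_ext_support[symmetric, OF fF]) (auto simp: ca)
  also have "\<dots> = smw (lin_ext smw sm E w x) l"
    by (simp add: ca rvs_mult[OF vs_w] rvs_sum_vec[OF vs_w] lin_ext_def)
  finally show ?thesis .
qed

lemma lin_ext_section:
  assumes lin: "rlinear smw sm \<pi>" and lift: "\<And>i. \<pi> (w i) = E i"
  shows "\<pi> (lin_ext smw sm E w x) = x"
  unfolding lin_ext_def rlin_sum[OF lin] rlin_sm[OF lin] lift by (rule coord_sum[OF vs basis])

end

definition subgrp :: "'a::ab_group_add set \<Rightarrow> bool" where
  "subgrp H \<longleftrightarrow> 0 \<in> H \<and> (\<forall>a\<in>H. \<forall>b\<in>H. a - b \<in> H)"

lemma subgrp_0: "subgrp H \<Longrightarrow> 0 \<in> H"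
  unfolding subgrp_def by blast

lemma subgrp_diff: "subgrp H \<Longrightarrow> a \<in> H \<Longrightarrow> b \<in> H \<Longrightarrow> a - b \<in> H"
  unfolding subgrp_def by blast

lemma subgrp_add: "subgrp H \<Longrightarrow> a \<in> H \<Longrightarrow> b \<in> H \<Longrightarrow> a + b \<in> H"
  using subgrp_diff[of H a "0 - b"] subgrp_diff[of H 0 b] subgrp_0[of H] by simp

lemma stable_subgrp: "stable_subgroup \<sigma> \<epsilon> H \<Longrightarrow> subgrp H"
  unfolding stable_subgroup_def subgrp_def by blast

lemma stable_Ksub: "stable_subgroup \<sigma> \<epsilon> H \<Longrightarrow> Ksub \<sigma> \<epsilon> \<subseteq> H"
  unfolding stable_subgroup_def by blast

lemma stable_mult: "stable_subgroup \<sigma> \<epsilon> H \<Longrightarrow> t \<in> H \<Longrightarrow> \<sigma> l * t * l \<in> H"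
  unfolding stable_subgroup_def by blast

context
  fixes H :: "'a::ab_group_add set"
  assumes H: "subgrp H"
begin

lemma mem_coset: "x \<in> coset H a \<longleftrightarrow> x - a \<in> H"
  unfolding coset_def by (auto simp: algebra_simps) (metis add.commute diff_add_cancel)

lemma coset_self: "a \<in> coset H a"
  using mem_coset subgrp_0[OF H] by simp

lemma coset_eq_iff: "coset H a = coset H b \<longleftrightarrow> a - b \<in> H"
proof
  assume "coset H a = coset H b"
  thus "a - b \<in> H" using coset_self[of a] mem_coset by simp
next
  assume d: "a - b \<in> H"
  have "x - a \<in> H \<longleftrightarrow> x - b \<in> H" for x
    using subgrp_add[OF H _ d, of "x - a"] subgrp_diff[OF H _ d, of "x - b"]
    by (auto simp: algebra_simps)
  thus "coset H a = coset H b" using mem_coset by blast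
qed

lemma coset_mem_eq: "x \<in> coset H a \<Longrightarrow> coset H x = coset H a"
  using mem_coset coset_eq_iff by blast

lemma coset_zero: "coset H 0 = H"
  using mem_coset by auto

lemma coset_is_subgrp: "coset H a = H \<longleftrightarrow> a \<in> H"
  using coset_eq_iff[of a 0] coset_zero by simp

lemma cplus_coset: "cplus (coset H a) (coset H b) = coset H (a + b)"
proof (rule set_eqI, rule iffI)
  fix x assume "x \<in> cplus (coset H a) (coset H b)"
  then obtain c d where "x = c + d" "c - a \<in> H" "d - b \<in> H"
    unfolding cplus_def mem_coset by blast
  thus "x \<in> coset H (a + b)"
    using subgrp_add[OF H, of "c - a" "d - b"] mem_coset by (simp add: algebra_simps)
next
  fix x assume "x \<in> coset H (a + b)"
  hence "x - a \<in> coset H b" using mem_coset by (simp add: algebra_simps)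
  moreover have "x = a + (x - a)" by simp
  ultimately show "x \<in> cplus (coset H a) (coset H b)"
    using coset_self[of a] unfolding cplus_def by blast
qed

end

lemma cover_coset:
  assumes T: "subgrp T" and K: "subgrp K" and KT: "K \<subseteq> T"
  shows "{g + r + t | r t. r \<in> coset K s \<and> t \<in> T} = coset T (g + s)"
proof (rule set_eqI, rule iffI)
  fix x assume "x \<in> {g + r + t | r t. r \<in> coset K s \<and> t \<in> T}"
  then obtain r t where x: "x = g + r + t" and r: "r - s \<in> K" and t: "t \<in> T"
    unfolding mem_coset[OF K] by blast
  have diff: "x - (g + s) = (r - s) + t" unfolding x by (simp add: algebra_simps)
  have "(r - s) + t \<in> T" using subgrp_add[OF T _ t] r KT by blast
  thus "x \<in> coset T (g + s)" unfolding mem_coset[OF T] diff .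
next
  fix x assume "x \<in> coset T (g + s)"
  hence "x - (g + s) \<in> T" unfolding mem_coset[OF T] .
  moreover have "x = g + s + (x - (g + s))" by simp
  ultimately show "x \<in> {g + r + t | r t. r \<in> coset K s \<and> t \<in> T}"
    using coset_self[OF K, of s] by blast
qed

context
  fixes \<sigma> :: "'k::division_ring \<Rightarrow> 'k" and \<epsilon> :: 'k
  assumes adm: "admissible \<sigma> \<epsilon>"
begin

lemma adm_add: "\<sigma> (a + b) = \<sigma> a + \<sigma> b"
  using adm unfolding admissible_def anti_aut_def by blast

lemma adm_mult: "\<sigma> (a * b) = \<sigma> b * \<sigma> a"
  using adm unfolding admissible_def anti_aut_def by blast

lemma adm_zero: "\<sigma> 0 = 0"
  using adm_add[of 0 0] by simp

lemma adm_diff: "\<sigma> (a - b) = \<sigma> a - \<sigma> b"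
  using adm_add[of "a - b" b] by (simp add: algebra_simps)

lemma Ksub_subgrp: "subgrp (Ksub \<sigma> \<epsilon>)"
proof -
  have "0 = 0 - \<sigma> 0 * \<epsilon>" by (simp add: adm_zero)
  hence "0 \<in> Ksub \<sigma> \<epsilon>" unfolding Ksub_def by blast
  moreover have "x - y \<in> Ksub \<sigma> \<epsilon>" if x: "x \<in> Ksub \<sigma> \<epsilon>" and y: "y \<in> Ksub \<sigma> \<epsilon>" for x y
  proof -
    obtain s t where "x = s - \<sigma> s * \<epsilon>" "y = t - \<sigma> t * \<epsilon>"
      using x y unfolding Ksub_def by blast
    hence "x - y = (s - t) - \<sigma> (s - t) * \<epsilon>" by (simp add: adm_diff algebra_simps)
    thus ?thesis unfolding Ksub_def by blast
  qed
  ultimately show ?thesis unfolding subgrp_def by blast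
qed

text \<open>\<open>K_{\<sigma>,\<epsilon>}\<close> is stable under \<open>t \<mapsto> \<lambda>\<^sup>\<sigma> t \<lambda>\<close>; this uses \<open>t\<^sup>\<sigma>\<^sup>\<sigma> = \<epsilon> t \<epsilon>\<inverse>\<close>.\<close>
lemma Ksub_conj: assumes k: "k \<in> Ksub \<sigma> \<epsilon>" shows "\<sigma> l * k * l \<in> Ksub \<sigma> \<epsilon>"
proof -
  have ss: "\<sigma> (\<sigma> l) = \<epsilon> * l * inverse \<epsilon>" and en: "\<epsilon> \<noteq> 0"
    using adm unfolding admissible_def by auto
  obtain t where t: "k = t - \<sigma> t * \<epsilon>" using k unfolding Ksub_def by blast
  let ?t = "\<sigma> l * t * l"
  have "\<sigma> ?t * \<epsilon> = \<sigma> l * \<sigma> t * (\<epsilon> * l * inverse \<epsilon>) * \<epsilon>"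
    by (simp add: adm_mult ss mult.assoc)
  also have "\<dots> = \<sigma> l * \<sigma> t * \<epsilon> * l" using en by (simp add: mult.assoc)
  finally have "\<sigma> l * k * l = ?t - \<sigma> ?t * \<epsilon>" unfolding t by (simp add: algebra_simps)
  thus ?thesis unfolding Ksub_def by blast
qed

lemma circK_coset: "circK \<sigma> \<epsilon> (coset (Ksub \<sigma> \<epsilon>) s) l = coset (Ksub \<sigma> \<epsilon>) (\<sigma> l * s * l)"
proof (rule set_eqI, rule iffI)
  note K = Ksub_subgrp
  fix x assume "x \<in> circK \<sigma> \<epsilon> (coset (Ksub \<sigma> \<epsilon>) s) l"
  then obtain t d where x: "x = \<sigma> l * t * l + d" and t: "t - s \<in> Ksub \<sigma> \<epsilon>" and d: "d \<in> Ksub \<sigma> \<epsilon>"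
    unfolding circK_def mem_coset[OF K] by blast
  have "x - \<sigma> l * s * l = \<sigma> l * (t - s) * l + d" unfolding x by (simp add: algebra_simps)
  thus "x \<in> coset (Ksub \<sigma> \<epsilon>) (\<sigma> l * s * l)"
    using subgrp_add[OF K Ksub_conj[OF t] d] mem_coset[OF K] by simp
next
  note K = Ksub_subgrp
  fix x assume "x \<in> coset (Ksub \<sigma> \<epsilon>) (\<sigma> l * s * l)"
  hence "x - \<sigma> l * s * l \<in> Ksub \<sigma> \<epsilon>" unfolding mem_coset[OF K] .
  moreover have "x = \<sigma> l * s * l + (x - \<sigma> l * s * l)" by simp
  ultimately show "x \<in> circK \<sigma> \<epsilon> (coset (Ksub \<sigma> \<epsilon>) s) l"
    using coset_self[OF K, of s] unfolding circK_def by blast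
qed

end

locale gen_quadratic_form =
  fixes \<sigma> :: "'k::division_ring \<Rightarrow> 'k" and \<epsilon> :: 'k
    and sc :: "'v::ab_group_add \<Rightarrow> 'k \<Rightarrow> 'v"
    and H :: "'k set" and p :: "'v \<Rightarrow> 'k set" and h :: "'v \<Rightarrow> 'v \<Rightarrow> 'k"
  assumes admissible_pair: "admissible \<sigma> \<epsilon>"
    and right_vs: "rvs sc"
    and is_gen_qf: "gen_qf \<sigma> \<epsilon> sc H p h"
begin

lemma H_subgrp: "subgrp H"
  using is_gen_qf stable_subgrp unfolding gen_qf_def by blast

lemma p_rep: "\<exists>t. p w = coset H t"
  using is_gen_qf unfolding gen_qf_def by blast

lemma p_add: "p x = coset H t \<Longrightarrow> p y = coset H s \<Longrightarrow> p (x + y) = coset H (t + s + h x y)"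
  using is_gen_qf unfolding gen_qf_def by blast

lemma p_sc: "p w = coset H t \<Longrightarrow> p (sc w l) = coset H (\<sigma> l * t * l)"
  using is_gen_qf unfolding gen_qf_def by blast

lemma h_sesq: "trace_valued_sesq \<sigma> \<epsilon> sc h"
  using is_gen_qf unfolding gen_qf_def by blast

lemma h_add_left: "h (x + y) z = h x z + h y z"
  using h_sesq unfolding trace_valued_sesq_def by blast

lemma h_sc_sc: "h (sc x a) (sc y b) = \<sigma> a * h x y * b"
  using h_sesq unfolding trace_valued_sesq_def by blast

lemma h_sum_left: "h (\<Sum>i\<in>A. g i) y = (\<Sum>i\<in>A. h (g i) y)"
proof (induction A rule: infinite_finite_induct)
  case (infinite A)
  then show ?case using h_add_left[of 0 0 y] by simp
next
  case empty
  then show ?case using h_add_left[of 0 0 y] by simp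
next
  case (insert x F)
  then show ?case by (simp add: h_add_left)
qed

text \<open>The radical of \<open>h\<close> is two-sided, by \<open>(\<sigma>,\<epsilon>)\<close>-hermitian symmetry.\<close>
lemma rad_left: "u \<in> Rad_sesq h \<Longrightarrow> h u y = 0"
  unfolding Rad_sesq_def by blast

lemma rad_right: assumes "u \<in> Rad_sesq h" shows "h y u = 0"
proof -
  have "h y u = \<sigma> (h u y) * \<epsilon>" using h_sesq unfolding trace_valued_sesq_def by blast
  thus ?thesis using rad_left[OF assms] adm_zero[OF admissible_pair] by simp
qed

lemma p_zero: "p 0 = H"
proof -
  obtain t where "p 0 = coset H t" using p_rep by blast
  hence "p (sc 0 0) = coset H (\<sigma> 0 * t * 0)" by (rule p_sc)
  thus ?thesis using rvs_zero_vec[OF right_vs] coset_zero[OF H_subgrp] by simp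
qed

lemma p_add_rad:
  "p x = coset H t \<Longrightarrow> p u = coset H s \<Longrightarrow> u \<in> Rad_sesq h \<Longrightarrow> p (x + u) = coset H (t + s)"
  using p_add[of x t u s] rad_right[of u x] by simp

lemma p_singular_combination:
  fixes w :: "'i::linorder \<Rightarrow> 'v"
  assumes sing: "\<And>i. p (w i) = H" and "finite F"
  shows "p (\<Sum>i\<in>F. sc (w i) (c i))
    = coset H (\<Sum>(i, j)\<in>{(i, j). i < j \<and> i \<in> F \<and> j \<in> F}. \<sigma> (c i) * h (w i) (w j) * c j)"
  using \<open>finite F\<close>
proof (induction F rule: finite_linorder_max_induct)
  case empty
  show ?case using p_zero coset_zero[OF H_subgrp] by simp
next
  case (insert b A)
  let ?X = "\<Sum>i\<in>A. sc (w i) (c i)" and ?Y = "sc (w b) (c b)"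
  let ?P = "\<lambda>B. {(i, j). i < j \<and> i \<in> B \<and> j \<in> B}"
  let ?g = "\<lambda>(i, j). \<sigma> (c i) * h (w i) (w j) * c j"
  have bA: "b \<notin> A" using insert.hyps(2) by auto
  have "p (w b) = coset H 0" using sing[of b] coset_zero[OF H_subgrp] by simp
  hence pY: "p ?Y = coset H 0" using p_sc[of "w b" 0 "c b"] by simp
  have new_pairs: "?P (insert b A) = ?P A \<union> (\<lambda>i. (i, b)) ` A"
    using insert.hyps(2) by auto
  have finP: "finite (?P A)"
    by (rule finite_subset[of _ "A \<times> A"]) (use insert.hyps(1) in auto)
  have disj: "?P A \<inter> (\<lambda>i. (i, b)) ` A = {}" using bA by auto
  have "sum ?g (?P (insert b A)) = sum ?g (?P A) + sum ?g ((\<lambda>i. (i, b)) ` A)"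
    unfolding new_pairs by (rule sum.union_disjoint[OF finP _ disj]) (use insert.hyps(1) in simp)
  also have "sum ?g ((\<lambda>i. (i, b)) ` A) = (\<Sum>i\<in>A. \<sigma> (c i) * h (w i) (w b) * c b)"
    by (subst sum.reindex) (auto simp: inj_on_def)
  also have "\<dots> = h ?X ?Y"
    unfolding h_sum_left h_sc_sc ..
  finally have pairs: "sum ?g (?P (insert b A)) = sum ?g (?P A) + 0 + h ?X ?Y" by simp
  have "(\<Sum>i\<in>insert b A. sc (w i) (c i)) = ?X + ?Y"
    using bA insert.hyps(1) by (simp add: add.commute)
  thus ?case unfolding pairs using p_add[OF insert.IH pY] by simp
qed

end

locale cover_setting = gen_quadratic_form \<sigma> \<epsilon> smt T qt ft
  for \<sigma> :: "'k::division_ring \<Rightarrow> 'k" and \<epsilon> :: 'k and smt :: "'v::ab_group_add \<Rightarrow> 'k \<Rightarrow> 'v"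
    and T :: "'k set" and qt :: "'v \<Rightarrow> 'k set" and ft :: "'v \<Rightarrow> 'v \<Rightarrow> 'k" +
  fixes U :: "'v set" and sm :: "'w::ab_group_add \<Rightarrow> 'k \<Rightarrow> 'w" and \<pi> :: "'v \<Rightarrow> 'w"
    and q :: "'w \<Rightarrow> 'k set" and f :: "'w \<Rightarrow> 'w \<Rightarrow> 'k"
    and S :: "'k set" and E :: "'i::linorder \<Rightarrow> 'w"
  assumes U_sub: "rsubspace smt U"
    and U_rad: "U \<subseteq> Rad_sesq ft"
    and U_meet: "U \<inter> Rad_qf T qt ft = {0}"
    and vs: "rvs sm"
    and \<pi>_lin: "rlinear smt sm \<pi>"
    and \<pi>_surj: "surj \<pi>"
    and \<pi>_ker: "{x. \<pi> x = 0} = U"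
    and q_induced: "\<And>w t. qt w = coset T t \<Longrightarrow> q (\<pi> w) = coset (quot_codefect T qt U) t"
    and f_induced: "\<And>x y. f (\<pi> x) (\<pi> y) = ft x y"
    and S_sub: "Kcirc_subspace \<sigma> \<epsilon> S"
    and S_cap: "S \<inter> T = Ksub \<sigma> \<epsilon>"
    and S_plus: "cplus S T = quot_codefect T qt U"
    and E_basis: "rbasis sm E"
    and E_sing: "\<And>i. singular (quot_codefect T qt U) q (E i)"
begin

abbreviation "K \<equiv> Ksub \<sigma> \<epsilon>"
abbreviation "R \<equiv> quot_codefect T qt U"

lemma S_stable: "stable_subgroup \<sigma> \<epsilon> S"
  using S_sub unfolding Kcirc_subspace_def by blast

lemma S_subgrp: "subgrp S"
  using stable_subgrp[OF S_stable] .

lemma K_subgrp: "subgrp K"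
  using Ksub_subgrp[OF admissible_pair] .

lemma K_sub_T: "K \<subseteq> T"
  using is_gen_qf stable_Ksub unfolding gen_qf_def by blast

lemma U_add: "u \<in> U \<Longrightarrow> u' \<in> U \<Longrightarrow> u + u' \<in> U"
  using U_sub unfolding rsubspace_def by blast

lemma U_sc: "u \<in> U \<Longrightarrow> smt u l \<in> U"
  using U_sub unfolding rsubspace_def by blast

lemma \<pi>_zero_iff: "\<pi> x = 0 \<longleftrightarrow> x \<in> U"
  using \<pi>_ker by blast

lemma R_decomp: "x \<in> R \<longleftrightarrow> (\<exists>a b. x = a + b \<and> a \<in> S \<and> b \<in> T)"
  using S_plus unfolding cplus_def by blast

lemma R_subgrp: "subgrp R"
  unfolding subgrp_def
proof (intro conjI ballI)
  show "0 \<in> R" using R_decomp subgrp_0[OF S_subgrp] subgrp_0[OF H_subgrp] by force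
next
  fix x y assume "x \<in> R" "y \<in> R"
  then obtain a b c d where "x = a + b" "y = c + d" "a \<in> S" "b \<in> T" "c \<in> S" "d \<in> T"
    using R_decomp by blast
  moreover have "x - y = (a - c) + (b - d)" using \<open>x = a + b\<close> \<open>y = c + d\<close> by simp
  ultimately show "x - y \<in> R"
    using R_decomp subgrp_diff[OF S_subgrp] subgrp_diff[OF H_subgrp] by blast
qed

lemma R_attained: assumes "r \<in> R" shows "\<exists>u\<in>U. qt u = coset T r"
proof -
  obtain u where u: "u \<in> U" "r \<in> qt u" using assms unfolding quot_codefect_def by blast
  obtain t where "qt u = coset T t" using p_rep by blast
  thus ?thesis using u coset_mem_eq[OF H_subgrp, of r t] by auto
qed

lemma S_classes_mod_T:
  assumes "s \<in> S" "s' \<in> S" "coset T s = coset T s'"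
  shows "coset K s = coset K s'"
proof -
  have "s - s' \<in> T" using assms(3) coset_eq_iff[OF H_subgrp] by blast
  moreover have "s - s' \<in> S" using subgrp_diff[OF S_subgrp assms(1,2)] .
  ultimately show ?thesis using S_cap coset_eq_iff[OF K_subgrp] by blast
qed

subsection \<open>Lifting the singular basis\<close>

text \<open>Each \<open>E i\<close> has a \<open>qt\<close>-singular preimage: correct any preimage \<open>w\<^sub>0\<close> with
  \<open>qt w\<^sub>0 = t + T\<close> by some \<open>u \<in> U\<close> with \<open>qt u = -t + T\<close>, which exists since \<open>q (E i)\<close> is
  trivial, i.e. \<open>t \<in> R\<close>.\<close>
lemma singular_lift: "\<exists>w. \<pi> w = E i \<and> qt w = T"
proof -
  obtain w0 where w0: "\<pi> w0 = E i" using \<pi>_surj by (metis surjD)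
  obtain t where t: "qt w0 = coset T t" using p_rep by blast
  have "coset R t = R"
    using q_induced[OF t] w0 E_sing[of i] unfolding singular_def by simp
  hence "0 - t \<in> R" using coset_is_subgrp[OF R_subgrp] subgrp_diff[OF R_subgrp] subgrp_0[OF R_subgrp]
    by blast
  then obtain u where u: "u \<in> U" "qt u = coset T (0 - t)" using R_attained by blast
  have "qt (w0 + u) = coset T (t + (0 - t))"
    using p_add_rad[OF t u(2)] U_rad u(1) by blast
  hence "qt (w0 + u) = T" using coset_zero[OF H_subgrp] by simp
  moreover have "\<pi> (w0 + u) = E i" using rlin_add[OF \<pi>_lin] w0 \<pi>_zero_iff u(1) by simp
  ultimately show ?thesis by blast
qed

definition lifted_basis :: "'i \<Rightarrow> 'v" where
  "lifted_basis i = (SOME w. \<pi> w = E i \<and> qt w = T)"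

lemma lifted_basis_\<pi>: "\<pi> (lifted_basis i) = E i"
  and lifted_basis_singular: "qt (lifted_basis i) = T"
  using someI_ex[OF singular_lift[of i]] unfolding lifted_basis_def by auto

definition L :: "'w \<Rightarrow> 'v" where
  "L = lin_ext smt sm E lifted_basis"

lemma L_add: "L (x + y) = L x + L y"
  unfolding L_def by (rule lin_ext_add[OF right_vs vs E_basis])

lemma L_sc: "L (sm x l) = smt (L x) l"
  unfolding L_def by (rule lin_ext_sm[OF right_vs vs E_basis])

lemma \<pi>_L: "\<pi> (L x) = x"
  unfolding L_def by (rule lin_ext_section[OF right_vs vs E_basis \<pi>_lin lifted_basis_\<pi>])

lemma qt_L: "qt (L x) = coset T (gE \<sigma> sm E f x x)"
proof -
  let ?a = "coord sm E x"
  let ?F = "{i. ?a i \<noteq> 0}"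
  have "qt (L x) = coset T (\<Sum>(i, j)\<in>{(i, j). i < j \<and> i \<in> ?F \<and> j \<in> ?F}.
      \<sigma> (?a i) * ft (lifted_basis i) (lifted_basis j) * ?a j)"
    unfolding L_def lin_ext_def
    by (rule p_singular_combination[OF lifted_basis_singular coord_fin[OF vs E_basis]])
  also have "\<dots> = coset T (gE \<sigma> sm E f x x)"
    unfolding gE_def Let_def f_induced[symmetric] lifted_basis_\<pi>
    by (rule arg_cong[where f="coset T"], rule sum.cong) auto
  finally show ?thesis .
qed

subsection \<open>The form on \<open>U\<close> as a map to \<open>S/K\<close>\<close>

text \<open>Values of \<open>qt\<close> on \<open>U\<close> lie in \<open>R/T\<close>, hence have representatives in \<open>S\<close>.\<close>
lemma qt_U_in_S: assumes u: "u \<in> U" shows "\<exists>s. s \<in> S \<and> qt u = coset T s"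
proof -
  obtain t where t: "qt u = coset T t" using p_rep by blast
  have "t \<in> R" using u t coset_self[OF H_subgrp, of t] unfolding quot_codefect_def by blast
  then obtain a b where ab: "t = a + b" "a \<in> S" "b \<in> T" using R_decomp by blast
  have "coset T t = coset T a" using coset_eq_iff[OF H_subgrp] ab by simp
  thus ?thesis using t ab by blast
qed

definition S_part :: "'v \<Rightarrow> 'k" where
  "S_part u = (SOME s. s \<in> S \<and> qt u = coset T s)"

lemma S_part_S: "u \<in> U \<Longrightarrow> S_part u \<in> S"
  and qt_S_part: "u \<in> U \<Longrightarrow> qt u = coset T (S_part u)"
  using someI_ex[OF qt_U_in_S] unfolding S_part_def by auto

text \<open>\<open>u \<mapsto> S_part u + K\<close> is additive and semilinear, because \<open>U\<close> lies in the radical of \<open>ft\<close>.\<close>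
lemma S_part_add:
  assumes u: "u \<in> U" and u': "u' \<in> U"
  shows "coset K (S_part (u + u')) = coset K (S_part u + S_part u')"
proof (rule S_classes_mod_T)
  show "S_part (u + u') \<in> S" using S_part_S[OF U_add[OF u u']] .
  show "S_part u + S_part u' \<in> S" using subgrp_add[OF S_subgrp S_part_S[OF u] S_part_S[OF u']] .
  have "qt (u + u') = coset T (S_part u + S_part u')"
    using p_add_rad[OF qt_S_part[OF u] qt_S_part[OF u']] U_rad u' by blast
  thus "coset T (S_part (u + u')) = coset T (S_part u + S_part u')"
    using qt_S_part[OF U_add[OF u u']] by simp
qed

lemma S_part_sc:
  assumes u: "u \<in> U"
  shows "coset K (S_part (smt u l)) = coset K (\<sigma> l * S_part u * l)"
proof (rule S_classes_mod_T)
  show "S_part (smt u l) \<in> S" using S_part_S[OF U_sc[OF u]] .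
  show "\<sigma> l * S_part u * l \<in> S" using stable_mult[OF S_stable S_part_S[OF u]] .
  show "coset T (S_part (smt u l)) = coset T (\<sigma> l * S_part u * l)"
    using p_sc[OF qt_S_part[OF u]] qt_S_part[OF U_sc[OF u]] by simp
qed

text \<open>Injectivity: a vector of \<open>U\<close> with trivial \<open>S\<close>-part is singular and in \<open>Rad ft\<close>, hence \<open>0\<close>.\<close>
lemma S_part_trivial:
  assumes u: "u \<in> U" and triv: "S_part u \<in> K"
  shows "u = 0"
proof -
  have "qt u = T"
    using qt_S_part[OF u] triv K_sub_T coset_is_subgrp[OF H_subgrp] by auto
  hence "u \<in> Rad_qf T qt ft" using u U_rad unfolding Rad_qf_def singular_def by blast
  thus ?thesis using U_meet u by blast
qed

text \<open>The component of \<open>v\<close> in \<open>U\<close> with respect to \<open>Vt = L(V) \<oplus> U\<close>.\<close>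
definition U_part :: "'v \<Rightarrow> 'v" where
  "U_part v = v - L (\<pi> v)"

lemma U_part_U: "U_part v \<in> U"
  unfolding \<pi>_zero_iff[symmetric] U_part_def rlin_diff[OF \<pi>_lin] \<pi>_L by simp

lemma U_part_add: "U_part (x + y) = U_part x + U_part y"
  unfolding U_part_def rlin_add[OF \<pi>_lin] L_add by (simp add: algebra_simps)

lemma U_part_sc: "U_part (smt x l) = smt (U_part x) l"
  unfolding U_part_def rlin_sm[OF \<pi>_lin] L_sc rvs_diff_vec[OF right_vs] ..

definition \<alpha> :: "'v \<Rightarrow> 'w \<times> 'k set" where
  "\<alpha> v = (\<pi> v, coset K (S_part (U_part v)))"

lemma \<alpha>_add: "\<alpha> (x + y) = (fst (\<alpha> x) + fst (\<alpha> y), cplus (snd (\<alpha> x)) (snd (\<alpha> y)))"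
  unfolding \<alpha>_def
  by (simp add: rlin_add[OF \<pi>_lin] cplus_coset[OF K_subgrp] U_part_add S_part_add[OF U_part_U U_part_U])

lemma \<alpha>_sc: "\<alpha> (smt x l) = (sm (fst (\<alpha> x)) l, circK \<sigma> \<epsilon> (snd (\<alpha> x)) l)"
  unfolding \<alpha>_def
  by (simp add: rlin_sm[OF \<pi>_lin] circK_coset[OF admissible_pair] U_part_sc S_part_sc[OF U_part_U])

text \<open>\<open>\<alpha>\<close> transports \<open>qt\<close> to the cover: \<open>qt(L x + u) = g_E(x,x) + S_part u + T\<close>.\<close>
lemma \<alpha>_cover: "cover \<sigma> sm E f T (\<alpha> v) = qt v"
proof -
  have "cover \<sigma> sm E f T (\<alpha> v) = coset T (gE \<sigma> sm E f (\<pi> v) (\<pi> v) + S_part (U_part v))"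
    unfolding cover_def \<alpha>_def fst_conv snd_conv
    by (rule cover_coset[OF H_subgrp K_subgrp K_sub_T])
  also have "\<dots> = qt (L (\<pi> v) + U_part v)"
    using p_add_rad[OF qt_L qt_S_part[OF U_part_U]] U_rad U_part_U by blast
  also have "\<dots> = qt v" unfolding U_part_def by simp
  finally show ?thesis .
qed

lemma \<alpha>_inj: "inj \<alpha>"
proof (rule injI)
  fix v v' assume eq: "\<alpha> v = \<alpha> v'"
  hence p: "\<pi> v = \<pi> v'" and c: "coset K (S_part (U_part v)) = coset K (S_part (U_part v'))"
    unfolding \<alpha>_def by auto
  let ?w = "v - v'"
  have wU: "?w \<in> U" unfolding \<pi>_zero_iff[symmetric] rlin_diff[OF \<pi>_lin] p by simp
  have "U_part v = ?w + U_part v'" unfolding U_part_def p by simp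
  hence "coset K (S_part ?w + S_part (U_part v')) = coset K (S_part (U_part v'))"
    using S_part_add[OF wU U_part_U] c by simp
  hence "S_part ?w \<in> K" using coset_eq_iff[OF K_subgrp] by simp
  thus "v = v'" using S_part_trivial[OF wU] by simp
qed

lemma \<alpha>_range: "range \<alpha> = UNIV \<times> (coset K ` S)"
proof
  show "range \<alpha> \<subseteq> UNIV \<times> coset K ` S" unfolding \<alpha>_def using S_part_S[OF U_part_U] by auto
next
  show "UNIV \<times> coset K ` S \<subseteq> range \<alpha>"
  proof clarify
    fix x s assume s: "s \<in> S"
    have "s \<in> R" using R_decomp s subgrp_0[OF H_subgrp] by force
    then obtain u where u: "u \<in> U" "qt u = coset T s" using R_attained by blast
    have cs: "coset K (S_part u) = coset K s"
      using S_classes_mod_T[OF S_part_S[OF u(1)] s] qt_S_part[OF u(1)] u(2) by simp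
    have pv: "\<pi> (L x + u) = x" using rlin_add[OF \<pi>_lin] \<pi>_L \<pi>_zero_iff u(1) by simp
    hence "\<alpha> (L x + u) = (x, coset K s)" unfolding \<alpha>_def U_part_def cs[symmetric] by simp
    thus "(x, coset K s) \<in> range \<alpha>" by (metis rangeI)
  qed
qed

end

theorem mainTheorem18:
  fixes \<sigma> :: "'k::division_ring \<Rightarrow> 'k" and \<epsilon> :: 'k
    and smt :: "'v::ab_group_add \<Rightarrow> 'k \<Rightarrow> 'v"
    and T :: "'k set" and qt :: "'v \<Rightarrow> 'k set" and ft :: "'v \<Rightarrow> 'v \<Rightarrow> 'k"
    and U :: "'v set"
    and sm :: "'w::ab_group_add \<Rightarrow> 'k \<Rightarrow> 'w" and \<pi> :: "'v \<Rightarrow> 'w"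
    and q :: "'w \<Rightarrow> 'k set" and f :: "'w \<Rightarrow> 'w \<Rightarrow> 'k"
    and S :: "'k set" and E :: "'i::linorder \<Rightarrow> 'w"
  assumes adm: "admissible \<sigma> \<epsilon>"
    and vs_t: "rvs smt"
    and T_sub: "Kcirc_subspace \<sigma> \<epsilon> T"
    and qt_form: "gen_qf \<sigma> \<epsilon> smt T qt ft"
    and qt_nontriv: "nontrivial_qf T qt"
    and qt_span: "rspan smt {w. singular T qt w} = UNIV"
    and U_sub: "rsubspace smt U"
    and U_rad: "U \<subseteq> Rad_sesq ft"
    and U_meet: "U \<inter> Rad_qf T qt ft = {0}"
    \<comment> \<open>V = Vt/U, realised by a surjective linear map with kernel U\<close>
    and vs: "rvs sm"
    and \<pi>_lin: "rlinear smt sm \<pi>"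
    and \<pi>_surj: "surj \<pi>"
    and \<pi>_ker: "{x. \<pi> x = 0} = U"
    \<comment> \<open>the quotient form q = qt_U with values in Kbar/Rbar, Rbar = Tbar_U, and its sesquilinearization f\<close>
    and q_def: "\<And>w t. qt w = coset T t \<Longrightarrow> q (\<pi> w) = coset (quot_codefect T qt U) t"
    and f_def: "\<And>x y. f (\<pi> x) (\<pi> y) = ft x y"
    and q_nontriv: "nontrivial_qf (quot_codefect T qt U) q"
    \<comment> \<open>Sbar is a complement of Tbar in Rbar\<close>
    and S_sub: "Kcirc_subspace \<sigma> \<epsilon> S"
    and S_cap: "S \<inter> T = Ksub \<sigma> \<epsilon>"
    and S_plus: "cplus S T = quot_codefect T qt U"
    \<comment> \<open>E a basis of V consisting of q-singular vectors\<close>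
    and E_basis: "rbasis sm E"
    and E_sing: "\<And>i. singular (quot_codefect T qt U) q (E i)"
  shows "\<exists>\<alpha> :: 'v \<Rightarrow> 'w \<times> 'k set.
           bij_betw \<alpha> UNIV (UNIV \<times> (coset (Ksub \<sigma> \<epsilon>) ` S))
         \<and> (\<forall>x y. \<alpha> (x + y) = (fst (\<alpha> x) + fst (\<alpha> y), cplus (snd (\<alpha> x)) (snd (\<alpha> y))))
         \<and> (\<forall>x l. \<alpha> (smt x l) = (sm (fst (\<alpha> x)) l, circK \<sigma> \<epsilon> (snd (\<alpha> x)) l))
         \<and> (\<forall>v. cover \<sigma> sm E f T (\<alpha> v) = qt v)"
proof -
  interpret cover_setting \<sigma> \<epsilon> smt T qt ft U sm \<pi> q f S E
    by unfold_locales (fact adm vs_t qt_form U_sub U_rad U_meet vs \<pi>_lin \<pi>_surj \<pi>_ker q_def f_def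
        S_sub S_cap S_plus E_basis E_sing)+
  show ?thesis
    using \<alpha>_inj \<alpha>_range \<alpha>_add \<alpha>_sc \<alpha>_cover unfolding bij_betw_def by blast
qed

end
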